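(* Let $n\ge2$ be an integer and $f(u,\bar u)=u^n+u+\bar u$. Then $0$ is an isolated root of $f$ and \[ \operatorname{sm}(f,0)=\begin{cases}1,& n \text{ even},\\ -1,& n\equiv3\pmod 4,\\ 1,& n\equiv1\pmod 4.\end{cases} \]
   Context: For a mixed polynomial $h(u,\bar u)$ in one complex variable with isolated root $\alpha$, the multiplicity with sign $\operatorname{sm}(h,\alpha)$ is the mapping degree of $h/|h|:\{|u-\alpha|=\varepsilon\}\to S^1$ for small $\varepsilon>0$, the circle oriented counterclockwise. *)

theory Defs
  imports "HOL-Complex_Analysis.Complex_Analysis"
begin

text \<open>A function of one complex variable (a mixed polynomial h(u, conj u) is rendered as
  a function complex \<Rightarrow> complex) has an isolated root at alpha.\<close>
definition isolated_root :: "(complex \<Rightarrow> complex) \<Rightarrow> complex \<Rightarrow> bool" where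
  "isolated_root h \<alpha> \<longleftrightarrow> h \<alpha> = 0 \<and>
     (\<exists>e>0. \<forall>u. 0 < cmod (u - \<alpha>) \<and> cmod (u - \<alpha>) < e \<longrightarrow> h u \<noteq> 0)"

text \<open>Mapping degree of h/|h| restricted to the counterclockwise circle of radius e about
  alpha, i.e. the winding number about 0 of the loop (h/|h|) o circlepath alpha e in S^1.\<close>
definition circle_degree :: "(complex \<Rightarrow> complex) \<Rightarrow> complex \<Rightarrow> real \<Rightarrow> complex" where
  "circle_degree h \<alpha> e =
     winding_number ((\<lambda>u. h u / complex_of_real (cmod (h u))) \<circ> circlepath \<alpha> e) 0"

definition sm :: "(complex \<Rightarrow> complex) \<Rightarrow> complex \<Rightarrow> int" where
  "sm h \<alpha> = (THE d. \<forall>\<^sub>F e in at_right 0. circle_degree h \<alpha> e = of_int d)"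

end

theory Submission
  imports Defs
begin

text \<open>
  On the circle \<open>\<bar>u\<bar> = e\<close> write \<open>u = e v\<close>, so that \<open>f u = e (2 Re v + e^(n-1) v^n)\<close>.
  Away from the imaginary axis the term \<open>2 Re v\<close> dominates and \<open>Re (f u)\<close> has the sign of
  \<open>Re u\<close>. Near \<open>v = \<plusminus>\<i>\<close> the perturbation \<open>v^n \<approx> (\<i> Im v)^n\<close> decides: for odd \<open>n\<close>
  its imaginary part has the sign of \<open>Im v\<close>, or of \<open>-Im v\<close> when \<open>n mod 4 = 3\<close>; for even \<open>n\<close>
  it is real to first order, and where its real part works against \<open>2 Re v\<close> the sign of
  \<open>Im (v^n)\<close>, which is that of \<open>Im v\<close>, takes over. Hence \<open>f u\<close> is never a nonpositive
  multiple of \<open>g u\<close>, where \<open>g = cnj\<close> if \<open>n mod 4 = 3\<close> and \<open>g = id\<close> otherwise, so the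
  straight-line homotopy from \<open>f/\<bar>f\<bar>\<close> to \<open>g\<close> on small circles avoids \<open>0\<close> and the degree
  is the winding number of \<open>g\<close>, namely \<open>-1\<close> or \<open>1\<close>.
\<close>

lemma zero_notin_closed_segment_if_functional_mult_pos:
  fixes a b :: "'a::real_normed_vector" and f :: "'a \<Rightarrow> real"
  assumes "bounded_linear f" and "0 < f a * f b"
  shows "0 \<notin> closed_segment a b"
proof
  assume "0 \<in> closed_segment a b"
  then have "f 0 \<in> closed_segment (f a) (f b)"
    using closed_segment_linear_image[OF bounded_linear.linear[OF assms(1)]] by blast
  moreover have "f 0 = 0"
    using assms(1) by (simp add: linear_simps)
  ultimately show False
    using assms(2) by (auto simp: closed_segment_eq_real_ivl zero_less_mult_iff
        split: if_splits)
qed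

lemma zero_notin_closed_segment_if_inner_nonneg:
  fixes a b :: "'a::real_inner"
  assumes "a \<noteq> 0" and "b \<noteq> 0" and "0 \<le> inner a b"
  shows "0 \<notin> closed_segment a b"
proof
  assume "0 \<in> closed_segment a b"
  then obtain s where s: "0 \<le> s" "s \<le> 1" and 0: "(1 - s) *\<^sub>R a + s *\<^sub>R b = 0"
    unfolding closed_segment_def by auto
  have "(1 - s) * inner a b + s * inner b b = inner ((1 - s) *\<^sub>R a + s *\<^sub>R b) b"
    by (simp add: inner_add_left)
  also have "\<dots> = 0"
    unfolding 0 by simp
  finally have "(1 - s) * inner a b + s * inner b b = 0" .
  moreover have "0 \<le> (1 - s) * inner a b" and "0 \<le> s * inner b b"
    using s assms(3) by simp_all
  ultimately have "s * inner b b = 0"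
    by linarith
  then have "s = 0"
    using assms(2) by simp
  with 0 assms(1) show False
    by simp
qed

lemma zero_notin_closed_segment_normalize:
  fixes a :: complex
  assumes "a \<noteq> 0"
  shows "0 \<notin> closed_segment a (a / of_real (cmod a))"
proof (rule zero_notin_closed_segment_if_inner_nonneg)
  have "a / of_real (cmod a) = (1 / cmod a) *\<^sub>R a"
    by (simp add: scaleR_conv_of_real)
  then show "0 \<le> inner a (a / of_real (cmod a))"
    by simp
qed (use assms in auto)

lemma zero_notin_closed_segment_mult_iff:
  fixes a b c :: complex
  assumes "c \<noteq> 0"
  shows "0 \<in> closed_segment (c * a) (c * b) \<longleftrightarrow> 0 \<in> closed_segment a b"
proof -
  have "linear ((*) c)"
    by (simp add: linear_times)
  then have "closed_segment (c * a) (c * b) = (*) c ` closed_segment a b"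
    by (rule closed_segment_linear_image)
  then show ?thesis
    using assms by auto
qed

lemma circle_degree_eq_winding_number:
  assumes "0 < e" and "continuous_on (sphere \<alpha> e) h" and "\<And>u. u \<in> sphere \<alpha> e \<Longrightarrow> h u \<noteq> 0"
  shows "circle_degree h \<alpha> e = winding_number (h \<circ> circlepath \<alpha> e) 0"
proof -
  let ?\<gamma> = "circlepath \<alpha> e"
  have image: "path_image ?\<gamma> = sphere \<alpha> e"
    using assms(1) by simp
  have "path (h \<circ> ?\<gamma>)"
    using assms(2) image by (intro path_continuous_image) auto
  moreover have "path ((\<lambda>u. h u / of_real (cmod (h u))) \<circ> ?\<gamma>)"
    using assms(2,3) image by (intro path_continuous_image continuous_intros) auto
  moreover have "?\<gamma> t \<in> sphere \<alpha> e" if "t \<in> {0..1}" for t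
    using image that unfolding path_image_def by blast
  ultimately show ?thesis
    unfolding circle_degree_def using assms(3) zero_notin_closed_segment_normalize
    by (intro winding_number_loops_linear_eq) (auto simp: pathstart_compose pathfinish_compose)
qed

lemma circle_degree_eq_winding_number_if_segments_avoid_zero:
  assumes "0 < e" and "continuous_on (sphere \<alpha> e) h" and "continuous_on (sphere \<alpha> e) g"
    and "\<And>u. u \<in> sphere \<alpha> e \<Longrightarrow> 0 \<notin> closed_segment (h u) (g u)"
  shows "circle_degree h \<alpha> e = winding_number (g \<circ> circlepath \<alpha> e) 0"
proof -
  have image: "path_image (circlepath \<alpha> e) = sphere \<alpha> e"
    using assms(1) by simp
  then have on_sphere: "circlepath \<alpha> e t \<in> sphere \<alpha> e" if "t \<in> {0..1}" for t
    using that unfolding path_image_def by blast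
  have "h u \<noteq> 0" if "u \<in> sphere \<alpha> e" for u
    using assms(4)[OF that] by (metis ends_in_segment(1))
  then have "circle_degree h \<alpha> e = winding_number (h \<circ> circlepath \<alpha> e) 0"
    by (rule circle_degree_eq_winding_number[OF assms(1,2)])
  also have "\<dots> = winding_number (g \<circ> circlepath \<alpha> e) 0"
    using assms(2,3,4) image on_sphere
    by (intro winding_number_loops_linear_eq[symmetric] path_continuous_image)
      (auto simp: pathstart_compose pathfinish_compose)
  finally show ?thesis .
qed

lemma sm_eqI:
  assumes "\<forall>\<^sub>F e in at_right 0. circle_degree h \<alpha> e = of_int d"
  shows "sm h \<alpha> = d"
  unfolding sm_def
proof (rule the_equality)
  fix d' assume "\<forall>\<^sub>F e in at_right 0. circle_degree h \<alpha> e = of_int d'"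
  with assms have "\<forall>\<^sub>F e in at_right (0::real). (of_int d' :: complex) = of_int d"
    by eventually_elim simp
  then show "d' = d"
    by simp
qed (fact assms)

lemma winding_number_cnj_circlepath:
  assumes "0 < e"
  shows "winding_number (cnj \<circ> circlepath 0 e) 0 = -1"
proof -
  have "cnj \<circ> circlepath 0 e = reversepath (circlepath 0 e)"
  proof
    fix t
    have "2 * of_real pi * \<i> * of_real (1 - t) = 2 * of_real pi * \<i> - 2 * of_real pi * \<i> * complex_of_real t"
      by (simp add: algebra_simps)
    then have "exp (2 * of_real pi * \<i> * of_real (1 - t)) = exp (- (2 * of_real pi * \<i> * complex_of_real t))"
      by (simp add: exp_diff exp_minus field_simps)
    then show "(cnj \<circ> circlepath 0 e) t = reversepath (circlepath 0 e) t"
      by (simp add: circlepath reversepath_def exp_cnj)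
  qed
  moreover have "winding_number (reversepath (circlepath 0 e)) 0 = - winding_number (circlepath 0 e) 0"
    using assms by (intro winding_number_reversepath) auto
  ultimately show ?thesis
    using assms by (simp add: winding_number_circlepath_centre)
qed

lemma Re_mult_cnj_pos_if_norm_diff_less:
  fixes w z :: complex
  assumes "cmod (w - z) < cmod z"
  shows "0 < Re (w * cnj z)"
proof -
  have "w * cnj z = (w - z) * cnj z + of_real ((cmod z)\<^sup>2)"
    by (simp only: complex_norm_square) (simp add: algebra_simps)
  then have "Re (w * cnj z) = Re ((w - z) * cnj z) + (cmod z)\<^sup>2"
    by simp
  moreover have "\<bar>Re ((w - z) * cnj z)\<bar> \<le> cmod (w - z) * cmod z"
    using abs_Re_le_cmod[of "(w - z) * cnj z"] by (simp add: norm_mult)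
  moreover have "0 < cmod z"
    using assms by (meson norm_ge_zero le_less_trans)
  then have "cmod (w - z) * cmod z < (cmod z)\<^sup>2"
    unfolding power2_eq_square by (rule mult_strict_right_mono[OF assms])
  ultimately show ?thesis
    by linarith
qed

lemma norm_power_diff_imaginary_part:
  fixes v :: complex
  assumes "cmod v = 1"
  shows "cmod (v ^ n - (\<i> * of_real (Im v)) ^ n) \<le> n * \<bar>Re v\<bar>"
proof -
  have "cmod (\<i> * of_real (Im v)) \<le> 1"
    using assms abs_Im_le_cmod[of v] by (simp add: norm_mult)
  then have "cmod (v ^ n - (\<i> * of_real (Im v)) ^ n) \<le> n * cmod (v - \<i> * of_real (Im v))"
    using assms by (intro norm_power_diff) auto
  also have "v - \<i> * of_real (Im v) = of_real (Re v)"
    by (simp add: complex_eq_iff)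
  finally show ?thesis
    by simp
qed

lemma Re_power_mult_cnj_pos_near_imaginary_axis:
  fixes v :: complex
  assumes "cmod v = 1" and "real n * \<bar>Re v\<bar> < (1/2) ^ n"
  shows "0 < Re (v ^ n * cnj ((\<i> * of_real (Im v)) ^ n))"
proof (cases "n = 0")
  case False
  have "\<bar>Re v\<bar> \<le> real n * \<bar>Re v\<bar>"
    using False by (simp add: mult_le_cancel_right1)
  also have "\<dots> < (1/2) ^ n"
    by (fact assms(2))
  also have "\<dots> \<le> 1/2"
    using False power_decreasing[of 1 n "1/2 :: real"] by simp
  finally have "(Re v)\<^sup>2 \<le> (1/2)\<^sup>2"
    by (simp add: abs_le_square_iff[symmetric])
  moreover have "(Re v)\<^sup>2 + (Im v)\<^sup>2 = 1"
    using assms(1) by (simp add: cmod_def)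
  ultimately have "(1/2)\<^sup>2 \<le> (Im v)\<^sup>2"
    by (simp add: power2_eq_square)
  then have "(1/2) ^ n \<le> \<bar>Im v\<bar> ^ n"
    by (intro power_mono) (simp_all add: abs_le_square_iff[symmetric])
  also have "\<dots> = cmod ((\<i> * of_real (Im v)) ^ n)"
    by (simp add: norm_power norm_mult)
  finally have "cmod (v ^ n - (\<i> * of_real (Im v)) ^ n) < cmod ((\<i> * of_real (Im v)) ^ n)"
    using norm_power_diff_imaginary_part[OF assms(1), of n] assms(2) by linarith
  then show ?thesis
    by (rule Re_mult_cnj_pos_if_norm_diff_less)
qed simp

lemma imaginary_unit_power_odd:
  assumes "odd n"
  shows "\<i> ^ n = (if n mod 4 = 3 then - \<i> else \<i>)"
proof -
  obtain k where n: "n = Suc (2 * k)"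
    using assms oddE by fastforce
  then have "\<i> ^ n = (-1) ^ k * \<i>"
    by (simp add: mult.commute[of 2 k])
  moreover have "even k \<longleftrightarrow> n mod 4 \<noteq> 3"
    using n by presburger
  ultimately show ?thesis
    by (cases "even k") auto
qed

lemma odd_power_Im_sign_near_imaginary_axis:
  fixes v :: complex
  assumes "odd n" and "cmod v = 1" and "real n * \<bar>Re v\<bar> < (1/2) ^ n"
  shows "0 < Im (v ^ n) * Im (if n mod 4 = 3 then cnj v else v)"
proof -
  define s :: real where "s = (if n mod 4 = 3 then -1 else 1)"
  have "(\<i> * of_real (Im v)) ^ n = \<i> * of_real (s * Im v ^ n)"
    using imaginary_unit_power_odd[OF assms(1)] by (simp add: power_mult_distrib s_def)
  then have "0 < Im (v ^ n) * (s * Im v ^ n)"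
    using Re_power_mult_cnj_pos_near_imaginary_axis[OF assms(2,3)] by simp
  also have "Im v ^ n = Im v ^ (n - 1) * Im v"
    using assms(1) by (metis odd_pos power_minus_mult)
  finally have "0 < Im v ^ (n - 1) * (Im (v ^ n) * (s * Im v))"
    by (simp add: algebra_simps)
  moreover have "0 \<le> Im v ^ (n - 1)"
    using assms(1) by (simp add: zero_le_even_power)
  ultimately have "0 < Im (v ^ n) * (s * Im v)"
    by (metis zero_less_mult_iff not_le)
  then show ?thesis
    by (simp add: s_def split: if_splits)
qed

lemma even_power_Re_sign_near_imaginary_axis:
  fixes v :: complex
  assumes "cmod v = 1" and "real (2 * m) * \<bar>Re v\<bar> < (1/2) ^ (2 * m)"
  shows "0 < (-1) ^ m * Re (v ^ (2 * m))"
proof -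
  have "(\<i> * of_real (Im v)) ^ (2 * m) = of_real ((-1) ^ m * Im v ^ (2 * m))"
    by (simp add: power_mult_distrib mult.commute[of 2 m])
  then have "0 < Im v ^ (2 * m) * ((-1) ^ m * Re (v ^ (2 * m)))"
    using Re_power_mult_cnj_pos_near_imaginary_axis[OF assms] by (simp add: algebra_simps)
  moreover have "0 \<le> Im v ^ (2 * m)"
    by (simp add: zero_le_even_power)
  ultimately show ?thesis
    by (simp add: zero_less_mult_iff)
qed

lemma Im_power_even_eq:
  fixes v :: complex
  shows "Im (v ^ (2 * m)) =
    2 * Re v * Im v * Re (\<Sum>i<m. (cnj v ^ 2) ^ (m - Suc i) * (v ^ 2) ^ i)"
proof -
  define S where "S = (\<Sum>i<m. (cnj v ^ 2) ^ (m - Suc i) * (v ^ 2) ^ i)"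
  have "v ^ (2 * m) - cnj (v ^ (2 * m)) = (v ^ 2) ^ m - (cnj v ^ 2) ^ m"
    by (simp only: power_mult complex_cnj_power)
  also have "\<dots> = (v ^ 2 - cnj v ^ 2) * S"
    unfolding S_def by (rule power_diff_sumr2)
  also have "v ^ 2 - cnj v ^ 2 = (v - cnj v) * (v + cnj v)"
    by (simp add: power2_eq_square algebra_simps)
  finally have "of_real (2 * Im (v ^ (2 * m))) * \<i> = of_real (2 * Im v) * \<i> * of_real (2 * Re v) * S"
    by (simp only: complex_diff_cnj complex_add_cnj mult.assoc)
  then have "Im (of_real (2 * Im (v ^ (2 * m))) * \<i>) = Im (of_real (4 * Re v * Im v) * \<i> * S)"
    by (simp add: algebra_simps)
  then show ?thesis
    by (simp add: S_def)
qed

lemma norm_mult_powers_diff_le: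
  fixes a b c :: complex
  assumes "cmod a = 1" and "cmod b = 1" and "cmod c = 1"
  shows "cmod (b ^ j * a ^ i - c ^ (j + i)) \<le> j * cmod (b - c) + i * cmod (a - c)"
proof -
  have "b ^ j * a ^ i - c ^ (j + i) = (b ^ j - c ^ j) * a ^ i + c ^ j * (a ^ i - c ^ i)"
    by (simp add: algebra_simps power_add)
  then have "cmod (b ^ j * a ^ i - c ^ (j + i)) \<le> cmod (b ^ j - c ^ j) + cmod (a ^ i - c ^ i)"
    using assms by (metis norm_mult norm_power norm_triangle_ineq mult_1_left mult_1_right power_one)
  also have "\<dots> \<le> j * cmod (b - c) + i * cmod (a - c)"
    using assms by (intro add_mono norm_power_diff) auto
  finally show ?thesis .
qed

text \<open>Every summand lies within \<open>2 (m - 1) \<bar>Re v\<bar>\<close> of \<open>(-1)^(m-1)\<close>, since \<open>v\<^sup>2\<close> and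
  \<open>cnj v\<^sup>2\<close> lie within \<open>2 \<bar>Re v\<bar>\<close> of \<open>-1\<close>.\<close>

lemma Re_sum_even_power_sign:
  fixes v :: complex
  assumes "cmod v = 1" and "0 < m" and "2 * (real m - 1) * \<bar>Re v\<bar> < 1"
  shows "(-1) ^ m * Re (\<Sum>i<m. (cnj v ^ 2) ^ (m - Suc i) * (v ^ 2) ^ i) < 0"
proof -
  have "v ^ 2 + 1 = v * (v + cnj v)"
    using complex_norm_square[of v] assms(1) by (simp add: power2_eq_square algebra_simps)
  then have dist_a: "cmod (v ^ 2 - (-1)) = 2 * \<bar>Re v\<bar>"
    using assms(1) by (simp add: complex_add_cnj norm_mult)
  moreover have "cnj v ^ 2 - (-1) = cnj (v ^ 2 - (-1))"
    by simp
  ultimately have dist_b: "cmod (cnj v ^ 2 - (-1)) = 2 * \<bar>Re v\<bar>"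
    by (metis complex_mod_cnj)
  have term_sign: "0 < (-1) ^ (m - 1) * Re ((cnj v ^ 2) ^ (m - Suc i) * (v ^ 2) ^ i)" if "i < m" for i
  proof -
    let ?t = "(cnj v ^ 2) ^ (m - Suc i) * (v ^ 2) ^ i"
    have "cmod (?t - (-1) ^ (m - Suc i + i))
        \<le> real (m - Suc i) * (2 * \<bar>Re v\<bar>) + real i * (2 * \<bar>Re v\<bar>)"
      using norm_mult_powers_diff_le[of "v ^ 2" "cnj v ^ 2" "-1" "m - Suc i" i] dist_a dist_b
      by (simp only: assms(1) norm_power complex_mod_cnj norm_minus_cancel norm_one power_one)
    also have "\<dots> = 2 * (real m - 1) * \<bar>Re v\<bar>"
      using that by (simp add: of_nat_diff algebra_simps)
    also have "m - Suc i + i = m - 1"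
      using that by simp
    finally have "cmod (?t - (-1) ^ (m - 1)) < cmod ((-1 :: complex) ^ (m - 1))"
      using assms(3) by (simp add: norm_power)
    from Re_mult_cnj_pos_if_norm_diff_less[OF this] show ?thesis
      by (simp add: mult.commute)
  qed
  have "0 < (\<Sum>i<m. (-1) ^ (m - 1) * Re ((cnj v ^ 2) ^ (m - Suc i) * (v ^ 2) ^ i))"
    using assms(2) term_sign by (intro sum_pos) auto
  also have "\<dots> = (-1) ^ (m - 1) * Re (\<Sum>i<m. (cnj v ^ 2) ^ (m - Suc i) * (v ^ 2) ^ i)"
    by (simp only: Re_sum sum_distrib_left)
  also have "\<dots> = - ((-1) ^ m * Re (\<Sum>i<m. (cnj v ^ 2) ^ (m - Suc i) * (v ^ 2) ^ i))"
    using assms(2) by (cases m) simp_all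
  finally show ?thesis
    by simp
qed

lemma zero_notin_segment_even_near_imaginary_axis:
  fixes v :: complex and \<epsilon> :: real
  assumes "cmod v = 1" and "0 < m" and "0 < \<epsilon>"
    and near: "real (2 * m) * \<bar>Re v\<bar> < (1/2) ^ (2 * m)"
  shows "0 \<notin> closed_segment (of_real (2 * Re v) + of_real \<epsilon> * v ^ (2 * m)) v"
proof -
  define \<tau> :: real where "\<tau> = (-1) ^ m"
  define S where "S = (\<Sum>i<m. (cnj v ^ 2) ^ (m - Suc i) * (v ^ 2) ^ i)"
  let ?F = "of_real (2 * Re v) + of_real \<epsilon> * v ^ (2 * m)"
  have \<tau>_sq: "\<tau> * \<tau> = 1"
    by (simp add: \<tau>_def flip: power_add mult_2)
  have Re_sign: "0 < \<tau> * Re (v ^ (2 * m))"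
    unfolding \<tau>_def using assms(1) near by (rule even_power_Re_sign_near_imaginary_axis)
  have Im_eq: "Im (v ^ (2 * m)) = 2 * Re v * Im v * Re S"
    unfolding S_def by (rule Im_power_even_eq)
  have "(1/2) ^ (2 * m) \<le> (1::real)"
    by (simp add: power_le_one)
  then have near1: "real (2 * m) * \<bar>Re v\<bar> < 1"
    using near by linarith
  moreover have "2 * (real m - 1) * \<bar>Re v\<bar> \<le> real (2 * m) * \<bar>Re v\<bar>"
    by (intro mult_right_mono) auto
  ultimately have "2 * (real m - 1) * \<bar>Re v\<bar> < 1"
    by linarith
  then have S_sign: "\<tau> * Re S < 0"
    unfolding \<tau>_def S_def by (rule Re_sum_even_power_sign[OF assms(1,2)])
  have "\<tau> \<noteq> 0"
    using \<tau>_sq by auto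
  then consider "0 < \<tau> * Re v" | "\<tau> * Re v < 0" | "Re v = 0"
    by (metis linorder_neqE_linordered_idom mult_eq_0_iff)
  then show ?thesis
  proof cases
    case 1
    have "Re ?F * Re v = 2 * (Re v)\<^sup>2 + \<epsilon> * ((\<tau> * Re v) * (\<tau> * Re (v ^ (2 * m))))"
      using \<tau>_sq by (simp add: algebra_simps power2_eq_square)
    also have "\<dots> > 0"
      using 1 Re_sign assms(3) by (simp add: add_nonneg_pos)
    finally show ?thesis
      by (rule zero_notin_closed_segment_if_functional_mult_pos[OF bounded_linear_Re])
  next
    case 2
    have "(Re v)\<^sup>2 + (Im v)\<^sup>2 = 1"
      using assms(1) by (simp add: cmod_def)
    moreover have "\<bar>Re v\<bar> \<le> real (2 * m) * \<bar>Re v\<bar>"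
      using assms(2) by (simp add: mult_le_cancel_right1)
    then have "(Re v)\<^sup>2 < 1"
      using near1 by (simp add: abs_square_less_1)
    ultimately have "0 < (Im v)\<^sup>2"
      by linarith
    moreover have "0 < (\<tau> * Re v) * (\<tau> * Re S)"
      using 2 S_sign by (rule mult_neg_neg)
    ultimately have "0 < 2 * \<epsilon> * (Im v)\<^sup>2 * ((\<tau> * Re v) * (\<tau> * Re S))"
      using assms(3) by simp
    also have "\<dots> = Im ?F * Im v"
      using Im_eq \<tau>_sq by (simp add: algebra_simps power2_eq_square)
    finally have "0 < Im ?F * Im v" .
    then show ?thesis
      by (rule zero_notin_closed_segment_if_functional_mult_pos[OF bounded_linear_Im])
  next
    case 3
    have "Im ?F = 0"
      using 3 Im_eq by simp
    moreover have "Re ?F \<noteq> 0"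
      using 3 Re_sign assms(3) by auto
    moreover have "v \<noteq> 0"
      using assms(1) by auto
    ultimately show ?thesis
      using 3 by (intro zero_notin_closed_segment_if_inner_nonneg) (auto simp: inner_complex_def)
  qed
qed

lemma zero_notin_segment_unit_circle:
  fixes v :: complex and \<epsilon> :: real
  assumes "2 \<le> n" and "cmod v = 1" and "0 < \<epsilon>" and "\<epsilon> * (real n * 2 ^ (n + 1)) \<le> 1"
  shows "0 \<notin> closed_segment (of_real (2 * Re v) + of_real \<epsilon> * v ^ n)
                               (if n mod 4 = 3 then cnj v else v)"
    (is "0 \<notin> closed_segment ?F ?G")
proof (cases "\<epsilon> \<le> \<bar>Re v\<bar>")
  case True
  have "\<bar>Re (v ^ n)\<bar> \<le> 1"
    using abs_Re_le_cmod[of "v ^ n"] assms(2) by (simp add: norm_power)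
  then have "\<epsilon> * \<bar>Re v * Re (v ^ n)\<bar> \<le> \<epsilon> * \<bar>Re v\<bar>"
    using assms(3) by (simp add: abs_mult mult_left_le)
  also have "\<dots> \<le> \<bar>Re v\<bar> * \<bar>Re v\<bar>"
    by (rule mult_right_mono[OF True abs_ge_zero])
  finally have "\<bar>\<epsilon> * (Re v * Re (v ^ n))\<bar> \<le> (Re v)\<^sup>2"
    using assms(3) by (simp add: abs_mult power2_eq_square)
  moreover have "0 < (Re v)\<^sup>2"
    using True assms(3) by simp
  moreover have "Re ?F * Re ?G = 2 * (Re v)\<^sup>2 + \<epsilon> * (Re v * Re (v ^ n))"
    by (simp add: algebra_simps power2_eq_square)
  ultimately have "0 < Re ?F * Re ?G"
    by linarith
  then show ?thesis
    by (rule zero_notin_closed_segment_if_functional_mult_pos[OF bounded_linear_Re])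
next
  case False
  have "real n * \<epsilon> \<le> (1/2) ^ (n + 1)"
    using assms(4) by (simp add: power_one_over pos_le_divide_eq mult.assoc mult.left_commute)
  moreover have "real n * \<bar>Re v\<bar> < real n * \<epsilon>"
    using False assms(1) by simp
  moreover have "(1/2) ^ (n + 1) \<le> (1/2 :: real) ^ n"
    by (simp add: power_decreasing)
  ultimately have near: "real n * \<bar>Re v\<bar> < (1/2) ^ n"
    by linarith
  show ?thesis
  proof (cases "odd n")
    case True
    have "0 < \<epsilon> * (Im (v ^ n) * Im ?G)"
      using odd_power_Im_sign_near_imaginary_axis[OF True assms(2) near] assms(3) by simp
    then have "0 < Im ?F * Im ?G"
      by (simp add: algebra_simps)
    then show ?thesis
      by (rule zero_notin_closed_segment_if_functional_mult_pos[OF bounded_linear_Im])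
  next
    case False
    then obtain m where n: "n = 2 * m"
      by blast
    then have "0 < m" and "n mod 4 \<noteq> 3"
      using assms(1) by presburger+
    then show ?thesis
      using zero_notin_segment_even_near_imaginary_axis[OF assms(2) _ assms(3), of m] near n by simp
  qed
qed

lemma zero_notin_segment_small_circle:
  fixes u :: complex
  assumes n: "2 \<le> n" and u: "0 < cmod u" "cmod u \<le> 1 / (real n * 2 ^ (n + 1))"
  shows "0 \<notin> closed_segment (u ^ n + u + cnj u) (if n mod 4 = 3 then cnj u else u)"
proof -
  define e where "e = cmod u"
  define v where "v = u / of_real e"
  define \<epsilon> where "\<epsilon> = e ^ (n - 1)"
  have u_eq: "u = of_real e * v" and v: "cmod v = 1"
    using u by (simp_all add: e_def v_def norm_divide)
  have scale_pos: "0 < real n * 2 ^ (n + 1)"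
    using n by simp
  have "(1::real) \<le> 2 ^ (n + 1)"
    by (rule one_le_power) simp
  then have "1 * 1 \<le> real n * 2 ^ (n + 1)"
    using n by (intro mult_mono) simp_all
  then have "1 / (real n * 2 ^ (n + 1)) \<le> 1"
    by simp
  then have "e \<le> 1"
    using u by (simp add: e_def)
  then have "\<epsilon> \<le> e"
    using n u power_decreasing[of 1 "n - 1" e] by (simp add: \<epsilon>_def e_def)
  then have "\<epsilon> * (real n * 2 ^ (n + 1)) \<le> e * (real n * 2 ^ (n + 1))"
    using scale_pos by (intro mult_right_mono) auto
  also have "\<dots> \<le> 1"
    using u scale_pos by (simp add: e_def pos_le_divide_eq)
  finally have \<epsilon>_small: "\<epsilon> * (real n * 2 ^ (n + 1)) \<le> 1" .
  have "e ^ n = e * \<epsilon>"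
    using n by (simp add: \<epsilon>_def power_eq_if)
  then have "u ^ n = of_real e * (of_real \<epsilon> * v ^ n)"
    unfolding u_eq by (simp add: power_mult_distrib flip: of_real_power)
  moreover have "u + cnj u = of_real e * of_real (2 * Re v)"
    unfolding complex_add_cnj u_eq by simp
  ultimately have "u ^ n + u + cnj u = of_real e * (of_real (2 * Re v) + of_real \<epsilon> * v ^ n)"
    by (simp add: algebra_simps)
  moreover have "(if n mod 4 = 3 then cnj u else u) = of_real e * (if n mod 4 = 3 then cnj v else v)"
    unfolding u_eq by simp
  moreover have "0 < \<epsilon>" "e \<noteq> 0"
    using u by (simp_all add: \<epsilon>_def e_def)
  ultimately show ?thesis
    using zero_notin_segment_unit_circle[OF n v _ \<epsilon>_small] zero_notin_closed_segment_mult_iff by simp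
qed

theorem mainTheorem8:
  fixes n :: nat
  assumes "n \<ge> 2"
  defines "f \<equiv> (\<lambda>u::complex. u ^ n + u + cnj u)"
  shows "isolated_root f 0 \<and>
         sm f 0 = (if even n then 1 else if n mod 4 = 3 then -1 else 1)"
proof -
  define E :: real where "E = 1 / (real n * 2 ^ (n + 1))"
  define g where "g = (if n mod 4 = 3 then cnj else (\<lambda>u::complex. u))"
  have E: "0 < E"
    using assms(1) by (simp add: E_def)
  have segment: "0 \<notin> closed_segment (f u) (g u)" if "0 < cmod u" "cmod u \<le> E" for u
    using zero_notin_segment_small_circle[OF assms(1) that[unfolded E_def]]
    by (cases "n mod 4 = 3") (simp_all add: f_def g_def)
  then have f_nonzero: "f u \<noteq> 0" if "0 < cmod u" "cmod u \<le> E" for u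
    using that by (metis ends_in_segment(1))
  have root: "isolated_root f 0"
    unfolding isolated_root_def
  proof (intro conjI exI[of _ E] allI impI)
    show "f 0 = 0"
      using assms(1) by (simp add: f_def)
  qed (use E f_nonzero in auto)
  have continuous: "continuous_on A f" "continuous_on A g" for A
    by (auto simp: f_def g_def intro!: continuous_intros)
  have degree: "circle_degree f 0 e = (if n mod 4 = 3 then -1 else 1)" if "0 < e" "e \<le> E" for e
  proof -
    have "circle_degree f 0 e = winding_number (g \<circ> circlepath 0 e) 0"
      using that segment continuous by (intro circle_degree_eq_winding_number_if_segments_avoid_zero) auto
    also have "\<dots> = (if n mod 4 = 3 then -1 else 1)"
      using that by (cases "n mod 4 = 3")
        (simp_all add: g_def winding_number_cnj_circlepath winding_number_circlepath_centre comp_def[of "\<lambda>u. u"])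
    finally show ?thesis .
  qed
  have "sm f 0 = (if n mod 4 = 3 then -1 else 1)"
    using eventually_at_right_real[OF E] by (intro sm_eqI) (auto elim!: eventually_mono simp: degree)
  with root show ?thesis
    by auto presburger
qed

end
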